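(* Let $X_1,X_2,\dots$ be i.i.d. non-negative random variables with mean $\mu<\infty$ and continuous distribution function $F$. Let $(\Phi_n)_n$ be integer-valued random variables with $\Phi_n\to\infty$ a.s., and $(\Psi_n)_n$ real random variables with $\Psi_n\to\infty$ a.s., such that $\Psi_n/\Phi_n\to\rho$ a.s. for some constant $0<\rho\le\mu$. Let $\tau$ be a solution of $\int_0^\tau x\,\mathrm dF(x)=\rho$. Then $$\frac{N(\Phi_n,(X_k)_{k=1}^{\Phi_n},\Psi_n)}{\Phi_n}\to F(\tau)\quad\text{a.s.}$$ If moreover the $X_k$ are bounded, $b$ is the supremum of the support of $F$, and $\theta$ is a solution of $\int_\theta^bx\,\mathrm dF(x)=\rho$, then $$\frac{M(\Phi_n,(X_k)_{k=1}^{\Phi_n},\Psi_n)}{\Phi_n}\to1-F(\theta)\quad\text{a.s.}$$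
   Context: For $(x_k)_{k=1}^t$ let $x_{1,t}\le\dots\le x_{t,t}$ be its order statistics. Weakest-first counting function: $N(0,\varnothing,s)=0$ and, for $t\ge1$, $N(t,(x_k)_{k=1}^t,s)=0$ if $x_{1,t}>s$, otherwise $\max\{1\le k\le t:\sum_{j=1}^kx_{j,t}\le s\}$. Strongest-first counting function: $M(0,\varnothing,s)=0$ and, for $t\ge1$, $M(t,(x_k)_{k=1}^t,s)=0$ if $x_{t,t}>s$, otherwise $\max\{1\le k\le t:\sum_{j=t-k+1}^tx_{j,t}\le s\}$. *)

theory Defs
  imports "HOL-Probability.Probability"
begin

text \<open>Order statistics of x 1, ..., x t: the j-th smallest value x_{j,t} is
  order_stats t x ! (j - 1), for 1 <= j <= t.\<close>
definition order_stats :: "nat \<Rightarrow> (nat \<Rightarrow> real) \<Rightarrow> real list" where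
  "order_stats t x = sort (map x [1..<Suc t])"

definition weakest_count :: "nat \<Rightarrow> (nat \<Rightarrow> real) \<Rightarrow> real \<Rightarrow> nat" where
  "weakest_count t x s =
     (if t = 0 then 0
      else if order_stats t x ! 0 > s then 0
      else Max {k. 1 \<le> k \<and> k \<le> t \<and> (\<Sum>j=1..k. order_stats t x ! (j - 1)) \<le> s})"

definition strongest_count :: "nat \<Rightarrow> (nat \<Rightarrow> real) \<Rightarrow> real \<Rightarrow> nat" where
  "strongest_count t x s =
     (if t = 0 then 0
      else if order_stats t x ! (t - 1) > s then 0
      else Max {k. 1 \<le> k \<and> k \<le> t \<and> (\<Sum>j=t-k+1..t. order_stats t x ! (j - 1)) \<le> s})"

end

theory Submission
  imports Defs
begin

text \<open>Fix a threshold c. If the items X_k \<le> c among the first \<Phi>_n have total size at most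
  \<Psi>_n, the weakest-first rule accommodates at least all of them; if their total exceeds \<Psi>_n,
  it accommodates at most that many, because it always takes the smallest items first. By the
  strong law of large numbers, applied along the random index \<Phi>_n, the number and the total of
  these items, divided by \<Phi>_n, tend to F(c) and to the partial mean of x over [0, c], while
  \<Psi>_n/\<Phi>_n tends to \<rho>, the partial mean over [0, \<tau>]. As F is continuous, thresholds c on
  either side of \<tau> can be chosen with F(c) arbitrarily close to F(\<tau>) and partial means
  strictly on the corresponding side of \<rho>, which squeezes N/\<Phi>_n to F(\<tau>). The
  strongest-first count is handled symmetrically with the items X_k > c; boundedness of the
  X_k is needed only to apply the strong law to x times the indicator of (c, \<infinity>).\<close>

section \<open>Order statistics and the counting functions\<close>

lemma sum_nth_eq_sum_list_take:
  "k \<le> length xs \<Longrightarrow> (\<Sum>j=1..k. xs ! (j - 1)) = sum_list (take k (xs :: 'a::comm_monoid_add list))"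
  by (induction k) (simp_all add: take_Suc_conv_app_nth)

lemma sum_nth_eq_sum_list_take_rev:
  assumes "k \<le> length xs"
  shows "(\<Sum>j=length xs-k+1..length xs. xs ! (j - 1)) = sum_list (take k (rev (xs :: 'a::comm_monoid_add list)))"
  using assms
proof (induction k)
  case (Suc k)
  let ?t = "length xs"
  have "{?t - Suc k + 1..?t} = insert (?t - k) {?t - k + 1..?t}"
    using Suc.prems by auto
  moreover have "rev xs ! k = xs ! (?t - k - 1)"
    using Suc.prems by (simp add: rev_nth)
  ultimately show ?case
    using Suc by (simp add: take_Suc_conv_app_nth add.commute)
qed simp

lemma sum_list_take_mono:
  fixes xs :: "'a::ordered_comm_monoid_add list"
  assumes "\<forall>v\<in>set xs. 0 \<le> v" and "i \<le> j"
  shows "sum_list (take i xs) \<le> sum_list (take j xs)"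
proof -
  have "take j xs = take i xs @ take (j - i) (drop i xs)"
    using take_add[of i "j - i" xs] assms(2) by simp
  moreover have "0 \<le> sum_list (take (j - i) (drop i xs))"
    using assms(1) by (intro sum_list_nonneg) (auto dest: in_set_takeD in_set_dropD)
  ultimately show ?thesis
    using add_left_mono[of 0 _ "sum_list (take i xs)"] by simp
qed

lemma take_length_filter_eq_filter:
  assumes "sorted_wrt (\<lambda>a b. P b \<longrightarrow> P a) xs"
  shows "take (length (filter P xs)) xs = filter P xs"
  using assms
proof (induction xs)
  case (Cons a xs)
  show ?case
  proof (cases "P a")
    case False
    with Cons.prems have "filter P (a # xs) = []"
      by (auto simp: filter_empty_conv)
    then show ?thesis by simp
  qed (use Cons in simp)
qed simp

lemma length_order_stats [simp]: "length (order_stats t x) = t"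
  by (simp add: order_stats_def)

lemma sorted_order_stats: "sorted (order_stats t x)"
  by (simp add: order_stats_def)

lemma set_order_stats: "set (order_stats t x) = x ` {1..t}"
  by (auto simp: order_stats_def)

lemma length_filter_order_stats:
  "real (length (filter (\<lambda>v. v \<in> A) (order_stats t x))) = (\<Sum>k=1..t. indicator A (x k))"
  by (induction t) (simp_all add: order_stats_def filter_sort)

lemma sum_list_filter_order_stats:
  "sum_list (filter (\<lambda>v. v \<in> A) (order_stats t x)) = (\<Sum>k=1..t. x k * indicator A (x k))"
proof -
  have "sum_list (filter (\<lambda>v. v \<in> A) (map x [1..<Suc t])) = (\<Sum>k=1..t. x k * indicator A (x k))"
    by (induction t) auto
  then show ?thesis
    by (simp add: order_stats_def filter_sort flip: sum_mset_sum_list)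
qed

lemma order_stats_nonneg:
  assumes "\<forall>k\<in>{1..t}. 0 \<le> x k"
  shows "\<forall>v\<in>set (order_stats t x). 0 \<le> v"
  using assms by (auto simp: set_order_stats)

lemma weakest_count_le_length: "weakest_count t x s \<le> t"
  by (auto simp: weakest_count_def intro!: Max.boundedI)

lemma weakest_count_pos_sum_le:
  assumes "0 < weakest_count t x s"
  shows "sum_list (take (weakest_count t x s) (order_stats t x)) \<le> s"
proof -
  let ?K = "{k. 1 \<le> k \<and> k \<le> t \<and> (\<Sum>j=1..k. order_stats t x ! (j - 1)) \<le> s}"
  have "t \<noteq> 0" and "\<not> s < order_stats t x ! 0"
    using assms by (auto simp: weakest_count_def split: if_splits)
  then have "1 \<in> ?K" by simp
  then have "Max ?K \<in> ?K" by (intro Max_in) auto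
  moreover have "weakest_count t x s = Max ?K"
    using assms by (simp add: weakest_count_def split: if_splits)
  ultimately show ?thesis
    using sum_nth_eq_sum_list_take[of "weakest_count t x s" "order_stats t x"] by simp
qed

lemma weakest_count_ge:
  assumes nonneg: "\<forall>k\<in>{1..t}. 0 \<le> x k" and "k \<le> t"
    and sum: "sum_list (take k (order_stats t x)) \<le> s"
  shows "k \<le> weakest_count t x s"
proof (cases "k = 0")
  case False
  let ?xs = "order_stats t x"
  have "?xs \<noteq> []"
    using False \<open>k \<le> t\<close> by (auto simp flip: length_0_conv)
  then have "?xs ! 0 = sum_list (take 1 ?xs)"
    by (cases ?xs) auto
  also have "\<dots> \<le> sum_list (take k ?xs)"
    using order_stats_nonneg[OF nonneg] False by (intro sum_list_take_mono) auto
  finally have "\<not> s < ?xs ! 0" using sum by simp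
  moreover have "k \<le> Max {k. 1 \<le> k \<and> k \<le> t \<and> (\<Sum>j=1..k. ?xs ! (j - 1)) \<le> s}"
    using False \<open>k \<le> t\<close> sum sum_nth_eq_sum_list_take[of k ?xs] by (intro Max_ge) auto
  ultimately show ?thesis
    using False \<open>k \<le> t\<close> by (simp add: weakest_count_def)
qed simp

lemma weakest_count_le:
  assumes nonneg: "\<forall>k\<in>{1..t}. 0 \<le> x k"
    and sum: "s < sum_list (take k (order_stats t x))"
  shows "weakest_count t x s \<le> k"
proof (rule ccontr)
  assume "\<not> weakest_count t x s \<le> k"
  then have "sum_list (take k (order_stats t x)) \<le> sum_list (take (weakest_count t x s) (order_stats t x))"
    using order_stats_nonneg[OF nonneg] by (intro sum_list_take_mono) auto
  also have "\<dots> \<le> s"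
    using \<open>\<not> weakest_count t x s \<le> k\<close> by (intro weakest_count_pos_sum_le) simp
  finally show False using sum by simp
qed

lemma strongest_count_le_length: "strongest_count t x s \<le> t"
  by (auto simp: strongest_count_def intro!: Max.boundedI)

lemma strongest_count_pos_sum_le:
  assumes "0 < strongest_count t x s"
  shows "sum_list (take (strongest_count t x s) (rev (order_stats t x))) \<le> s"
proof -
  let ?K = "{k. 1 \<le> k \<and> k \<le> t \<and> (\<Sum>j=t-k+1..t. order_stats t x ! (j - 1)) \<le> s}"
  have "t \<noteq> 0" and "\<not> s < order_stats t x ! (t - 1)"
    using assms by (auto simp: strongest_count_def split: if_splits)
  then have "1 \<in> ?K" by simp
  then have "Max ?K \<in> ?K" by (intro Max_in) auto
  moreover have "strongest_count t x s = Max ?K"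
    using assms by (simp add: strongest_count_def split: if_splits)
  ultimately show ?thesis
    using sum_nth_eq_sum_list_take_rev[of "strongest_count t x s" "order_stats t x"] by simp
qed

lemma strongest_count_ge:
  assumes nonneg: "\<forall>k\<in>{1..t}. 0 \<le> x k" and "k \<le> t"
    and sum: "sum_list (take k (rev (order_stats t x))) \<le> s"
  shows "k \<le> strongest_count t x s"
proof (cases "k = 0")
  case False
  let ?xs = "order_stats t x"
  have "?xs \<noteq> []"
    using False \<open>k \<le> t\<close> by (auto simp flip: length_0_conv)
  then have "?xs ! (t - 1) = sum_list (take 1 (rev ?xs))"
    using length_order_stats[of t x] by (cases ?xs rule: rev_cases) (auto simp: nth_append)
  also have "\<dots> \<le> sum_list (take k (rev ?xs))"
    using order_stats_nonneg[OF nonneg] False by (intro sum_list_take_mono) auto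
  finally have "\<not> s < ?xs ! (t - 1)" using sum by simp
  moreover have "k \<le> Max {k. 1 \<le> k \<and> k \<le> t \<and> (\<Sum>j=t-k+1..t. ?xs ! (j - 1)) \<le> s}"
    using False \<open>k \<le> t\<close> sum sum_nth_eq_sum_list_take_rev[of k ?xs]
    by (intro Max_ge) auto
  ultimately show ?thesis
    using False \<open>k \<le> t\<close> by (simp add: strongest_count_def)
qed simp

lemma strongest_count_le:
  assumes nonneg: "\<forall>k\<in>{1..t}. 0 \<le> x k"
    and sum: "s < sum_list (take k (rev (order_stats t x)))"
  shows "strongest_count t x s \<le> k"
proof (rule ccontr)
  assume "\<not> strongest_count t x s \<le> k"
  then have "sum_list (take k (rev (order_stats t x)))
      \<le> sum_list (take (strongest_count t x s) (rev (order_stats t x)))"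
    using order_stats_nonneg[OF nonneg] by (intro sum_list_take_mono) auto
  also have "\<dots> \<le> s"
    using \<open>\<not> strongest_count t x s \<le> k\<close> by (intro strongest_count_pos_sum_le) simp
  finally show False using sum by simp
qed

lemma take_order_stats_atMost:
  "take (length (filter (\<lambda>v. v \<in> {..c}) (order_stats t x))) (order_stats t x)
     = filter (\<lambda>v. v \<in> {..c}) (order_stats t x)"
  by (rule take_length_filter_eq_filter, rule sorted_wrt_mono_rel[OF _ sorted_order_stats]) auto

lemma take_rev_order_stats_greaterThan:
  "take (length (filter (\<lambda>v. v \<in> {c<..}) (order_stats t x))) (rev (order_stats t x))
     = rev (filter (\<lambda>v. v \<in> {c<..}) (order_stats t x))"
proof -
  have "sorted_wrt (\<lambda>a b. b \<in> {c<..} \<longrightarrow> a \<in> {c<..}) (rev (order_stats t x))"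
    unfolding sorted_wrt_rev by (rule sorted_wrt_mono_rel[OF _ sorted_order_stats]) auto
  then have "take (length (filter (\<lambda>v. v \<in> {c<..}) (rev (order_stats t x)))) (rev (order_stats t x))
      = filter (\<lambda>v. v \<in> {c<..}) (rev (order_stats t x))"
    by (rule take_length_filter_eq_filter)
  then show ?thesis
    by (simp flip: rev_filter)
qed

lemma weakest_count_ge_threshold:
  assumes nonneg: "\<forall>k\<in>{1..t}. 0 \<le> x k"
    and sum: "(\<Sum>k=1..t. x k * indicator {..c} (x k)) \<le> s"
  shows "(\<Sum>k=1..t. indicator {..c} (x k)) \<le> real (weakest_count t x s)"
proof -
  let ?C = "length (filter (\<lambda>v. v \<in> {..c}) (order_stats t x))"
  have "sum_list (take ?C (order_stats t x)) \<le> s"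
    using sum by (simp only: take_order_stats_atMost sum_list_filter_order_stats)
  then have "?C \<le> weakest_count t x s"
    using length_filter_le[of _ "order_stats t x"] by (intro weakest_count_ge[OF nonneg]) auto
  then show ?thesis
    by (simp only: flip: length_filter_order_stats)
qed

lemma weakest_count_le_threshold:
  assumes nonneg: "\<forall>k\<in>{1..t}. 0 \<le> x k"
    and sum: "s < (\<Sum>k=1..t. x k * indicator {..c} (x k))"
  shows "real (weakest_count t x s) \<le> (\<Sum>k=1..t. indicator {..c} (x k))"
proof -
  let ?C = "length (filter (\<lambda>v. v \<in> {..c}) (order_stats t x))"
  have "s < sum_list (take ?C (order_stats t x))"
    using sum by (simp only: take_order_stats_atMost sum_list_filter_order_stats)
  then have "weakest_count t x s \<le> ?C"
    by (rule weakest_count_le[OF nonneg])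
  then show ?thesis
    by (simp only: flip: length_filter_order_stats)
qed

lemma strongest_count_ge_threshold:
  assumes nonneg: "\<forall>k\<in>{1..t}. 0 \<le> x k"
    and sum: "(\<Sum>k=1..t. x k * indicator {c<..} (x k)) \<le> s"
  shows "(\<Sum>k=1..t. indicator {c<..} (x k)) \<le> real (strongest_count t x s)"
proof -
  let ?C = "length (filter (\<lambda>v. v \<in> {c<..}) (order_stats t x))"
  have "sum_list (take ?C (rev (order_stats t x))) \<le> s"
    using sum by (simp only: take_rev_order_stats_greaterThan sum_list_rev sum_list_filter_order_stats)
  then have "?C \<le> strongest_count t x s"
    using length_filter_le[of _ "order_stats t x"] by (intro strongest_count_ge[OF nonneg]) auto
  then show ?thesis
    by (simp only: flip: length_filter_order_stats)
qed

lemma strongest_count_le_threshold: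
  assumes nonneg: "\<forall>k\<in>{1..t}. 0 \<le> x k"
    and sum: "s < (\<Sum>k=1..t. x k * indicator {c<..} (x k))"
  shows "real (strongest_count t x s) \<le> (\<Sum>k=1..t. indicator {c<..} (x k))"
proof -
  let ?C = "length (filter (\<lambda>v. v \<in> {c<..}) (order_stats t x))"
  have "s < sum_list (take ?C (rev (order_stats t x)))"
    using sum by (simp only: take_rev_order_stats_greaterThan sum_list_rev sum_list_filter_order_stats)
  then have "strongest_count t x s \<le> ?C"
    by (rule strongest_count_le[OF nonneg])
  then show ?thesis
    by (simp only: flip: length_filter_order_stats)
qed

section \<open>Squeezing a ratio between threshold counts\<close>

lemma LIMSEQ_of_eventually_dist_less_inverse:
  fixes f :: "nat \<Rightarrow> real"
  assumes "\<And>m. eventually (\<lambda>n. \<bar>f n - L\<bar> < 1 / real (Suc m)) sequentially"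
  shows "f \<longlonglongrightarrow> L"
proof (rule tendstoI)
  fix e :: real assume "e > 0"
  then obtain m where m: "inverse (real (Suc m)) < e" using reals_Archimedean by blast
  show "eventually (\<lambda>n. dist (f n) L < e) sequentially"
    using assms[of m] by (rule eventually_mono) (use m in \<open>auto simp: dist_real_def inverse_eq_divide\<close>)
qed

lemma eventually_less_ratio_of_threshold:
  fixes s S C N T :: "nat \<Rightarrow> real"
  assumes s: "(\<lambda>n. s n / T n) \<longlonglongrightarrow> \<rho>" and S: "(\<lambda>n. S n / T n) \<longlonglongrightarrow> g"
    and C: "(\<lambda>n. C n / T n) \<longlonglongrightarrow> p" and "g < \<rho>" and "q < p"
    and T: "\<And>n. 0 \<le> T n" and count: "\<And>n. S n \<le> s n \<Longrightarrow> C n \<le> N n"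
  shows "eventually (\<lambda>n. q < N n / T n) sequentially"
proof -
  define r where "r = (g + \<rho>) / 2"
  have "g < r" "r < \<rho>" unfolding r_def using \<open>g < \<rho>\<close> by simp_all
  with order_tendstoD[OF S] order_tendstoD[OF s] order_tendstoD(1)[OF C \<open>q < p\<close>]
  have "eventually (\<lambda>n. S n / T n < r \<and> r < s n / T n \<and> q < C n / T n) sequentially"
    by (intro eventually_conj) auto
  then show ?thesis
  proof eventually_elim
    case (elim n)
    then have "S n / T n < s n / T n" by linarith
    with T[of n] have "S n \<le> s n"
      by (cases "T n = 0") (auto simp: divide_less_cancel)
    then have "C n / T n \<le> N n / T n"
      using T[of n] count by (simp add: divide_right_mono)
    with elim show ?case by linarith
  qed
qed

lemma eventually_ratio_less_of_threshold:
  fixes s S C N T :: "nat \<Rightarrow> real"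
  assumes s: "(\<lambda>n. s n / T n) \<longlonglongrightarrow> \<rho>" and S: "(\<lambda>n. S n / T n) \<longlonglongrightarrow> g"
    and C: "(\<lambda>n. C n / T n) \<longlonglongrightarrow> p" and "\<rho> < g" and "p < q"
    and T: "\<And>n. 0 \<le> T n" and count: "\<And>n. s n < S n \<Longrightarrow> N n \<le> C n"
  shows "eventually (\<lambda>n. N n / T n < q) sequentially"
proof -
  define r where "r = (g + \<rho>) / 2"
  have "r < g" "\<rho> < r" unfolding r_def using \<open>\<rho> < g\<close> by simp_all
  with order_tendstoD[OF S] order_tendstoD[OF s] order_tendstoD(2)[OF C \<open>p < q\<close>]
  have "eventually (\<lambda>n. r < S n / T n \<and> s n / T n < r \<and> C n / T n < q) sequentially"
    by (intro eventually_conj) auto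
  then show ?thesis
  proof eventually_elim
    case (elim n)
    then have "s n / T n < S n / T n" by linarith
    with T[of n] have "s n < S n"
      by (cases "T n = 0") (auto simp: divide_less_cancel)
    then have "N n / T n \<le> C n / T n"
      using T[of n] count by (simp add: divide_right_mono)
    with elim show ?case by linarith
  qed
qed

(* C c and S c stand for the number and the total size of the items on one side of a threshold c;
   whether S c fits into the budget s decides on which side of C c the count N lies. *)
lemma AE_ratio_tendsto_of_thresholds:
  fixes N T s :: "'a \<Rightarrow> nat \<Rightarrow> real" and C S :: "real \<Rightarrow> 'a \<Rightarrow> nat \<Rightarrow> real"
    and p g :: "real \<Rightarrow> real"
  assumes ratio: "AE \<omega> in M. (\<lambda>n. s \<omega> n / T \<omega> n) \<longlonglongrightarrow> \<rho>"
    and count_lim: "\<And>c. AE \<omega> in M. (\<lambda>n. C c \<omega> n / T \<omega> n) \<longlonglongrightarrow> p c"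
    and sum_lim: "\<And>c. AE \<omega> in M. (\<lambda>n. S c \<omega> n / T \<omega> n) \<longlonglongrightarrow> g c"
    and N_bounds: "\<And>\<omega> n. 0 \<le> N \<omega> n \<and> N \<omega> n \<le> T \<omega> n"
    and count_ge: "AE \<omega> in M. \<forall>c n. S c \<omega> n \<le> s \<omega> n \<longrightarrow> C c \<omega> n \<le> N \<omega> n"
    and count_le: "AE \<omega> in M. \<forall>c n. s \<omega> n < S c \<omega> n \<longrightarrow> N \<omega> n \<le> C c \<omega> n"
    and below: "\<And>q. 0 \<le> q \<Longrightarrow> q < L \<Longrightarrow> \<exists>c. g c < \<rho> \<and> q < p c"
    and above: "\<And>q. L < q \<Longrightarrow> q \<le> 1 \<Longrightarrow> \<exists>c. \<rho> < g c \<and> p c < q"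
  shows "AE \<omega> in M. (\<lambda>n. N \<omega> n / T \<omega> n) \<longlonglongrightarrow> L"
proof -
  have T: "0 \<le> T \<omega> n" for \<omega> n
    using N_bounds[of \<omega> n] by linarith
  have lower: "AE \<omega> in M. eventually (\<lambda>n. q < N \<omega> n / T \<omega> n) sequentially" if "q < L" for q
  proof (cases "q < 0")
    case True
    then show ?thesis
      using N_bounds T by (intro AE_I2 always_eventually allI) (meson divide_nonneg_nonneg less_le_trans)
  next
    case False
    then obtain c where "g c < \<rho>" "q < p c"
      using below[of q] \<open>q < L\<close> by auto
    from ratio count_lim[of c] sum_lim[of c] count_ge show ?thesis
    proof eventually_elim
      case (elim \<omega>)
      show ?case
        by (rule eventually_less_ratio_of_threshold[OF elim(1,3,2) \<open>g c < \<rho>\<close> \<open>q < p c\<close> T])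
          (use elim(4) in blast)
    qed
  qed
  have upper: "AE \<omega> in M. eventually (\<lambda>n. N \<omega> n / T \<omega> n < q) sequentially" if "L < q" for q
  proof (cases "1 < q")
    case True
    have "N \<omega> n / T \<omega> n \<le> 1" for \<omega> n
      using N_bounds[of \<omega> n] by (cases "T \<omega> n = 0") auto
    with True show ?thesis
      by (intro AE_I2 always_eventually allI) (meson le_less_trans)
  next
    case False
    then obtain c where "\<rho> < g c" "p c < q"
      using above[of q] \<open>L < q\<close> by auto
    from ratio count_lim[of c] sum_lim[of c] count_le show ?thesis
    proof eventually_elim
      case (elim \<omega>)
      show ?case
        by (rule eventually_ratio_less_of_threshold[OF elim(1,3,2) \<open>\<rho> < g c\<close> \<open>p c < q\<close> T])
          (use elim(4) in blast)
    qed
  qed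
  have "AE \<omega> in M. \<forall>m. eventually (\<lambda>n. L - 1 / real (Suc m) < N \<omega> n / T \<omega> n) sequentially
                     \<and> eventually (\<lambda>n. N \<omega> n / T \<omega> n < L + 1 / real (Suc m)) sequentially"
    by (subst AE_all_countable) (auto intro!: AE_conjI lower upper)
  then show ?thesis
  proof eventually_elim
    case (elim \<omega>)
    show ?case
    proof (rule LIMSEQ_of_eventually_dist_less_inverse)
      fix m
      from elim[rule_format, of m] show "eventually (\<lambda>n. \<bar>N \<omega> n / T \<omega> n - L\<bar> < 1 / real (Suc m)) sequentially"
        by (auto elim: eventually_elim2)
    qed
  qed
qed

section \<open>Strong law of large numbers for bounded functions\<close>

context prob_space
begin

lemma AE_LIMSEQ_of_summable_tails:
  fixes Y :: "nat \<Rightarrow> 'a \<Rightarrow> real"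
  assumes [measurable]: "\<And>n. Y n \<in> borel_measurable M"
    and tails: "\<And>\<epsilon>. 0 < \<epsilon> \<Longrightarrow> summable (\<lambda>n. prob {\<omega>\<in>space M. \<epsilon> \<le> \<bar>Y n \<omega> - L\<bar>})"
  shows "AE \<omega> in M. (\<lambda>n. Y n \<omega>) \<longlonglongrightarrow> L"
proof -
  have "AE \<omega> in M. eventually (\<lambda>n. \<bar>Y n \<omega> - L\<bar> < 1 / real (Suc m)) sequentially" for m
  proof -
    have "AE \<omega> in M. eventually (\<lambda>n. \<omega> \<in> space M - {\<omega>\<in>space M. 1 / real (Suc m) \<le> \<bar>Y n \<omega> - L\<bar>}) sequentially"
      using tails[of "1 / real (Suc m)"] by (intro borel_cantelli_AE1) (auto simp: less_top[symmetric])
    then show ?thesis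
      by (rule AE_mp) (auto intro!: AE_I2 elim!: eventually_mono)
  qed
  then have "AE \<omega> in M. \<forall>m. eventually (\<lambda>n. \<bar>Y n \<omega> - L\<bar> < 1 / real (Suc m)) sequentially"
    by (subst AE_all_countable) auto
  then show ?thesis
    by (rule AE_mp) (auto intro!: AE_I2 LIMSEQ_of_eventually_dist_less_inverse)
qed

(* Hoeffding's inequality makes the tails of the sample means geometrically small,
   so the Borel-Cantelli lemma applies. *)
lemma strong_law_bounded:
  assumes indep: "indep_vars (\<lambda>_. borel) X {1..}"
    and ident: "\<And>i. 1 \<le> i \<Longrightarrow> distr M borel (X i) = distr M borel (X 1)"
    and g[measurable]: "g \<in> borel_measurable borel"
    and bounded: "AE x in distr M borel (X 1). \<bar>g x\<bar> \<le> B"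
  shows "AE \<omega> in M. (\<lambda>t. (\<Sum>k=1..t. g (X k \<omega>)) / real t) \<longlonglongrightarrow> (\<integral>x. g x \<partial>distr M borel (X 1))"
proof -
  have X[measurable]: "X i \<in> borel_measurable M" if "1 \<le> i" for i
    using indep that unfolding indep_vars_def2 by auto
  define Y where "Y i \<omega> = g (X i \<omega>)" for i \<omega>
  have Y[measurable]: "Y i \<in> borel_measurable M" if "1 \<le> i" for i
    unfolding Y_def using that by measurable
  define a where "a = - \<bar>B\<bar> - 1"
  define b where "b = \<bar>B\<bar> + 1"
  have ab: "a < b" unfolding a_def b_def by simp
  have mean: "(\<integral>x. g x \<partial>distr M borel (X 1)) = expectation (Y 1)"
    unfolding Y_def by (rule integral_distr) auto
  have tail: "prob {\<omega>\<in>space M. \<epsilon> \<le> \<bar>(\<Sum>i=1..Suc n. Y i \<omega>) / real (Suc n) - expectation (Y 1)\<bar>}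
      \<le> 2 * exp (-2 * \<epsilon>\<^sup>2 / (b - a)\<^sup>2) ^ Suc n" if "0 \<le> \<epsilon>" for \<epsilon> n
  proof -
    interpret Hoeffding_ineq_iid M "{1..Suc n}" Y "Y 1" a b "expectation (Y 1)"
    proof unfold_locales
      show "indep_vars (\<lambda>_. borel) Y {1..Suc n}"
        unfolding Y_def by (rule indep_vars_compose2[OF indep_vars_subset[OF indep]]) auto
      show "distr M borel (Y i) = distr M borel (Y 1)" if "i \<in> {1..Suc n}" for i
      proof -
        have "distr M borel (Y j) = distr (distr M borel (X j)) borel g" if "1 \<le> j" for j
          unfolding Y_def using that by (subst distr_distr) (auto simp: comp_def)
        then show ?thesis
          using that ident[of i] by simp
      qed
      have "AE x in M. \<bar>Y 1 x\<bar> \<le> B"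
        using bounded unfolding Y_def by (subst (asm) AE_distr_iff) simp_all
      then show "AE x in M. Y 1 x \<in> {a..b}"
        by eventually_elim (simp add: a_def b_def abs_le_iff)
    qed (use Y[of 1] in simp_all)
    have "prob {\<omega>\<in>space M. \<epsilon> \<le> \<bar>(\<Sum>i=1..Suc n. Y i \<omega>) / real (Suc n) - expectation (Y 1)\<bar>}
        \<le> 2 * exp (-2 * real (Suc n) * \<epsilon>\<^sup>2 / (b - a)\<^sup>2)"
    proof -
      have "{1..Suc n} \<noteq> {}" and "card {1..Suc n} = Suc n" by simp_all
      then show ?thesis using Hoeffding_ineq_abs_ge'[OF that ab] by (simp only:) blast
    qed
    also have "exp (-2 * real (Suc n) * \<epsilon>\<^sup>2 / (b - a)\<^sup>2) = exp (-2 * \<epsilon>\<^sup>2 / (b - a)\<^sup>2) ^ Suc n"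
    proof -
      have "-2 * real (Suc n) * \<epsilon>\<^sup>2 / (b - a)\<^sup>2 = real (Suc n) * (-2 * \<epsilon>\<^sup>2 / (b - a)\<^sup>2)"
        by (simp only: times_divide_eq_right mult_ac)
      then show ?thesis by (simp only: exp_of_nat_mult)
    qed
    finally show ?thesis .
  qed
  have "AE \<omega> in M. (\<lambda>n. (\<Sum>i=1..Suc n. Y i \<omega>) / real (Suc n)) \<longlonglongrightarrow> expectation (Y 1)"
  proof (rule AE_LIMSEQ_of_summable_tails)
    show "(\<lambda>\<omega>. (\<Sum>i=1..Suc n. Y i \<omega>) / real (Suc n)) \<in> borel_measurable M" for n
      unfolding Y_def by measurable
    fix \<epsilon> :: real assume "0 < \<epsilon>"
    have "exp (-2 * \<epsilon>\<^sup>2 / (b - a)\<^sup>2) < 1" using \<open>0 < \<epsilon>\<close> ab by simp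
    then have "summable (\<lambda>n. 2 * exp (-2 * \<epsilon>\<^sup>2 / (b - a)\<^sup>2) ^ Suc n)"
      by (intro summable_mult summable_ignore_initial_segment[where k=1, simplified] summable_geometric) auto
    then show "summable (\<lambda>n. prob {\<omega>\<in>space M. \<epsilon> \<le> \<bar>(\<Sum>i=1..Suc n. Y i \<omega>) / real (Suc n) - expectation (Y 1)\<bar>})"
      by (rule summable_comparison_test') (use tail \<open>0 < \<epsilon>\<close> in auto)
  qed
  then show ?thesis
  proof eventually_elim
    case (elim \<omega>)
    then show ?case
      unfolding mean Y_def by (rule LIMSEQ_imp_Suc)
  qed
qed

lemma strong_law_bounded_random_index:
  assumes "indep_vars (\<lambda>_. borel) X {1..}"
    and "\<And>i. 1 \<le> i \<Longrightarrow> distr M borel (X i) = distr M borel (X 1)"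
    and "g \<in> borel_measurable borel"
    and "AE x in distr M borel (X 1). \<bar>g x\<bar> \<le> B"
    and \<Phi>: "AE \<omega> in M. filterlim (\<lambda>n. \<Phi> n \<omega>) at_top sequentially"
  shows "AE \<omega> in M. (\<lambda>n. (\<Sum>k=1..\<Phi> n \<omega>. g (X k \<omega>)) / real (\<Phi> n \<omega>))
           \<longlonglongrightarrow> (\<integral>x. g x \<partial>distr M borel (X 1))"
proof -
  have "AE \<omega> in M. (\<lambda>t. (\<Sum>k=1..t. g (X k \<omega>)) / real t) \<longlonglongrightarrow> (\<integral>x. g x \<partial>distr M borel (X 1))"
    by (rule strong_law_bounded[OF assms(1-4)])
  with \<Phi> show ?thesis
    by eventually_elim (rule filterlim_compose)
qed

end

section \<open>Nonnegative distributions with continuous cdf\<close>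

locale nonneg_continuous_distribution = real_distribution +
  assumes continuous_cdf: "continuous_on UNIV (cdf M)"
    and AE_nonneg: "AE x in M. 0 \<le> x"
    and integrable_id: "integrable M (\<lambda>x. x)"
begin

definition lower_mean :: "real \<Rightarrow> real" where
  "lower_mean c = (\<integral>x. x * indicator {..c} x \<partial>M)"

definition upper_mean :: "real \<Rightarrow> real" where
  "upper_mean c = (\<integral>x. x * indicator {c<..} x \<partial>M)"

lemma measure_singleton: "measure M {c} = 0"
  using continuous_cdf by (simp add: continuous_on_eq_continuous_at flip: isCont_cdf)

lemma AE_neq: "AE x in M. x \<noteq> c"
proof -
  have "{c} \<in> null_sets M"
    using measure_singleton by (auto simp: emeasure_eq_measure null_sets_def)
  then show ?thesis
    by (rule AE_I') auto
qed

lemma integrable_mult_indicator: "A \<in> sets borel \<Longrightarrow> integrable M (\<lambda>x. x * indicator A x)"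
  using integrable_real_mult_indicator[of A M "\<lambda>x. x"] integrable_id by simp

lemma cdf_surj:
  assumes "0 < y" "y < 1"
  shows "\<exists>c. cdf M c = y"
proof -
  obtain a where a: "cdf M a < y"
    using order_tendstoD(2)[OF cdf_lim_at_bot \<open>0 < y\<close>] by (auto simp: eventually_at_bot_linorder)
  obtain b where b: "y < cdf M b"
    using order_tendstoD(1)[OF cdf_lim_at_top_prob \<open>y < 1\<close>] by (auto simp: eventually_at_top_linorder)
  have "a \<le> b"
    using a b cdf_nondecreasing[of b a] by linarith
  then show ?thesis
    using IVT'[of "cdf M" a y b] a b continuous_on_subset[OF continuous_cdf] by force
qed

lemma integral_interval_pos:
  assumes "cdf M c < cdf M d"
  shows "0 < (\<integral>x. x * indicator {c<..d} x \<partial>M)"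
proof -
  have "c < d"
    using assms cdf_nondecreasing[of d c] by linarith
  have nonneg: "AE x in M. 0 \<le> x * indicator {c<..d} x"
    using AE_nonneg by eventually_elim (simp add: indicator_def)
  have "(\<integral>x. x * indicator {c<..d} x \<partial>M) \<noteq> 0"
  proof
    assume "(\<integral>x. x * indicator {c<..d} x \<partial>M) = 0"
    then have "AE x in M. x * indicator {c<..d} x = 0"
      using integral_nonneg_eq_0_iff_AE[OF integrable_mult_indicator nonneg] by simp
    with AE_neq[of 0] have "AE x in M. x \<notin> {c<..d}"
      by eventually_elim (auto simp: indicator_def)
    then have "measure M {c<..d} = 0"
      by (subst measure_eq_0_null_sets) (auto simp: AE_iff_null_sets)
    with assms cdf_diff_eq[OF \<open>c < d\<close>] show False by simp
  qed
  with nonneg show ?thesis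
    using integral_nonneg_AE[OF nonneg] by linarith
qed

lemma lower_mean_add_interval:
  assumes "c \<le> d"
  shows "lower_mean d = lower_mean c + (\<integral>x. x * indicator {c<..d} x \<partial>M)"
proof -
  have "(\<lambda>x. x * indicator {..d} x) = (\<lambda>x. x * indicator {..c} x + x * indicator {c<..d} x :: real)"
    using assms by (auto simp: indicator_def fun_eq_iff)
  then show ?thesis
    unfolding lower_mean_def by (simp add: integrable_mult_indicator)
qed

lemma upper_mean_add_interval:
  assumes "c \<le> d"
  shows "upper_mean c = (\<integral>x. x * indicator {c<..d} x \<partial>M) + upper_mean d"
proof -
  have "(\<lambda>x. x * indicator {c<..} x) = (\<lambda>x. x * indicator {c<..d} x + x * indicator {d<..} x :: real)"
    using assms by (auto simp: indicator_def fun_eq_iff)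
  then show ?thesis
    unfolding upper_mean_def by (simp add: integrable_mult_indicator)
qed

lemma le_of_cdf_less: "cdf M c < cdf M d \<Longrightarrow> c \<le> d"
  using cdf_nondecreasing[of d c] by linarith

lemma lower_mean_strict_mono:
  assumes "cdf M c < cdf M d"
  shows "lower_mean c < lower_mean d"
  using lower_mean_add_interval[OF le_of_cdf_less[OF assms]] integral_interval_pos[OF assms]
  by linarith

lemma upper_mean_strict_antimono:
  assumes "cdf M c < cdf M d"
  shows "upper_mean d < upper_mean c"
  using upper_mean_add_interval[OF le_of_cdf_less[OF assms]] integral_interval_pos[OF assms]
  by linarith

lemma lower_mean_threshold_below:
  assumes "0 \<le> q" "q < cdf M \<tau>"
  shows "\<exists>c. lower_mean c < lower_mean \<tau> \<and> q < cdf M c"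
proof -
  have "0 < (q + cdf M \<tau>) / 2" "(q + cdf M \<tau>) / 2 < 1"
    using assms cdf_bounded_prob[of \<tau>] by auto
  then obtain c where c: "cdf M c = (q + cdf M \<tau>) / 2"
    using cdf_surj by blast
  then show ?thesis
    using assms by (intro exI[of _ c] conjI lower_mean_strict_mono) auto
qed

lemma lower_mean_threshold_above:
  assumes "cdf M \<tau> < q" "q \<le> 1"
  shows "\<exists>c. lower_mean \<tau> < lower_mean c \<and> cdf M c < q"
proof -
  have "0 < (cdf M \<tau> + q) / 2" "(cdf M \<tau> + q) / 2 < 1"
    using assms cdf_nonneg[of \<tau>] by auto
  then obtain c where c: "cdf M c = (cdf M \<tau> + q) / 2"
    using cdf_surj by blast
  then show ?thesis
    using assms by (intro exI[of _ c] conjI lower_mean_strict_mono) auto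
qed

lemma upper_mean_threshold_below:
  assumes "0 \<le> q" "q < 1 - cdf M \<theta>"
  shows "\<exists>c. upper_mean c < upper_mean \<theta> \<and> q < 1 - cdf M c"
proof -
  have "0 < (cdf M \<theta> + 1 - q) / 2" "(cdf M \<theta> + 1 - q) / 2 < 1"
    using assms cdf_nonneg[of \<theta>] by auto
  then obtain c where c: "cdf M c = (cdf M \<theta> + 1 - q) / 2"
    using cdf_surj by blast
  then show ?thesis
    using assms by (intro exI[of _ c] conjI upper_mean_strict_antimono) auto
qed

lemma upper_mean_threshold_above:
  assumes "1 - cdf M \<theta> < q" "q \<le> 1"
  shows "\<exists>c. upper_mean \<theta> < upper_mean c \<and> 1 - cdf M c < q"
proof -
  have "0 < (1 - q + cdf M \<theta>) / 2" "(1 - q + cdf M \<theta>) / 2 < 1"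
    using assms cdf_bounded_prob[of \<theta>] by auto
  then obtain c where c: "cdf M c = (1 - q + cdf M \<theta>) / 2"
    using cdf_surj by blast
  then show ?thesis
    using assms by (intro exI[of _ c] conjI upper_mean_strict_antimono) auto
qed

lemma set_integral_eq_lower_mean: "(LINT x:{0..\<tau>}|M. x) = lower_mean \<tau>"
proof -
  have "AE x in M. indicator {0..\<tau>} x *\<^sub>R x = x * indicator {..\<tau>} x"
    using AE_nonneg by eventually_elim (auto simp: indicator_def)
  then show ?thesis
    unfolding set_lebesgue_integral_def lower_mean_def by (rule integral_cong_AE[rotated 2]) simp_all
qed

lemma measure_greaterThan: "measure M {c<..} = 1 - cdf M c"
  using prob_compl[of "{..c}"] by (simp add: cdf_def Compl_eq_Diff_UNIV[symmetric] flip: not_le)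

lemma AE_le_of_cdf_eq_1:
  assumes "cdf M b = 1"
  shows "AE x in M. x \<le> b"
proof -
  have "measure M {b<..} = 0"
    using assms by (simp add: measure_greaterThan)
  then have "{b<..} \<in> null_sets M"
    by (auto simp: null_sets_def emeasure_eq_measure)
  then show ?thesis
    by (rule AE_I') auto
qed

lemma set_integral_eq_upper_mean:
  assumes "cdf M b = 1"
  shows "(LINT x:{\<theta>..b}|M. x) = upper_mean \<theta>"
proof -
  have "AE x in M. indicator {\<theta>..b} x *\<^sub>R x = x * indicator {\<theta><..} x"
    using AE_le_of_cdf_eq_1[OF assms] AE_neq[of \<theta>] by eventually_elim (auto simp: indicator_def)
  then show ?thesis
    unfolding set_lebesgue_integral_def upper_mean_def by (rule integral_cong_AE[rotated 2]) simp_all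
qed

lemma cdf_Inf_level_1:
  assumes "AE x in M. x \<le> B"
  shows "cdf M (Inf {y. cdf M y = 1}) = 1"
proof -
  have "measure M {..B} = 1"
    using assms by (subst prob_eq_1) auto
  then have "B \<in> {y. cdf M y = 1}" by (simp add: cdf_def)
  moreover obtain a where "cdf M a < 1"
    using order_tendstoD(2)[OF cdf_lim_at_bot, of 1] by (auto simp: eventually_at_bot_linorder)
  then have "a \<le> y" if "cdf M y = 1" for y
    using that cdf_nondecreasing[of y a] by fastforce
  then have "bdd_below {y. cdf M y = 1}"
    by (intro bdd_belowI[of _ a]) auto
  moreover have "closed {y. cdf M y = 1}"
    using continuous_cdf by (intro closed_Collect_eq) auto
  ultimately have "Inf {y. cdf M y = 1} \<in> {y. cdf M y = 1}"
    by (intro closed_contains_Inf) auto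
  then show ?thesis by simp
qed

end

section \<open>Counting in an i.i.d. sample\<close>

locale continuous_nonneg_iid =
  fixes M :: "'a measure" and X :: "nat \<Rightarrow> 'a \<Rightarrow> real"
  assumes prob_space: "prob_space M"
    and indep: "prob_space.indep_vars M (\<lambda>_. borel) X {1..}"
    and ident: "\<And>i. 1 \<le> i \<Longrightarrow> distr M borel (X i) = distr M borel (X 1)"
    and nonneg: "\<And>i. 1 \<le> i \<Longrightarrow> AE \<omega> in M. 0 \<le> X i \<omega>"
    and integrable_X1: "integrable M (X 1)"
    and continuous_cdf_X1: "continuous_on UNIV (cdf (distr M borel (X 1)))"
begin

abbreviation law :: "real measure" where
  "law \<equiv> distr M borel (X 1)"

lemma measurable_X [measurable]: "1 \<le> i \<Longrightarrow> X i \<in> borel_measurable M"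
  using indep unfolding prob_space.indep_vars_def2[OF prob_space] by (metis atLeast_iff)

sublocale law: nonneg_continuous_distribution law
proof -
  interpret real_distribution law
    by (rule prob_space.real_distribution_distr[OF prob_space]) simp
  show "nonneg_continuous_distribution law"
  proof
    show "continuous_on UNIV (cdf law)" by (rule continuous_cdf_X1)
    show "AE x in law. 0 \<le> x"
      using nonneg[of 1] by (subst AE_distr_iff) auto
    show "integrable law (\<lambda>x. x)"
      using integrable_X1 by (subst integrable_distr_eq) auto
  qed
qed

lemma AE_all_nonneg: "AE \<omega> in M. \<forall>k\<ge>1. 0 \<le> X k \<omega>"
proof -
  have "AE \<omega> in M. 1 \<le> k \<longrightarrow> 0 \<le> X k \<omega>" for k
    using nonneg[of k] by (cases "1 \<le> k") auto
  then show ?thesis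
    by (subst AE_all_countable) auto
qed

lemma strong_law_random_index:
  assumes "g \<in> borel_measurable borel" and "AE x in law. \<bar>g x\<bar> \<le> B"
    and "AE \<omega> in M. filterlim (\<lambda>n. \<Phi> n \<omega>) at_top sequentially"
  shows "AE \<omega> in M. (\<lambda>n. (\<Sum>k=1..\<Phi> n \<omega>. g (X k \<omega>)) / real (\<Phi> n \<omega>)) \<longlonglongrightarrow> (\<integral>x. g x \<partial>law)"
  by (rule prob_space.strong_law_bounded_random_index[OF prob_space indep ident assms])

theorem weakest_count_ratio_tendsto:
  assumes \<Phi>: "AE \<omega> in M. filterlim (\<lambda>n. \<Phi> n \<omega>) at_top sequentially"
    and ratio: "AE \<omega> in M. (\<lambda>n. \<Psi> n \<omega> / real (\<Phi> n \<omega>)) \<longlonglongrightarrow> law.lower_mean \<tau>"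
  shows "AE \<omega> in M. (\<lambda>n. real (weakest_count (\<Phi> n \<omega>) (\<lambda>k. X k \<omega>) (\<Psi> n \<omega>)) / real (\<Phi> n \<omega>))
           \<longlonglongrightarrow> cdf law \<tau>"
proof (rule AE_ratio_tendsto_of_thresholds[OF ratio,
      where C = "\<lambda>c \<omega> n. \<Sum>k=1..\<Phi> n \<omega>. indicator {..c} (X k \<omega>)"
        and S = "\<lambda>c \<omega> n. \<Sum>k=1..\<Phi> n \<omega>. X k \<omega> * indicator {..c} (X k \<omega>)"])
  show "AE \<omega> in M. (\<lambda>n. (\<Sum>k=1..\<Phi> n \<omega>. indicator {..c} (X k \<omega>)) / real (\<Phi> n \<omega>)) \<longlonglongrightarrow> cdf law c" for c
  proof -
    have "(\<integral>x. indicator {..c} x \<partial>law) = cdf law c"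
      by (simp add: cdf_def)
    then show ?thesis
      using strong_law_random_index[OF _ _ \<Phi>, of "indicator {..c}" 1] by (simp only:) simp
  qed
  show "AE \<omega> in M. (\<lambda>n. (\<Sum>k=1..\<Phi> n \<omega>. X k \<omega> * indicator {..c} (X k \<omega>)) / real (\<Phi> n \<omega>))
          \<longlonglongrightarrow> law.lower_mean c" for c
  proof -
    have bounded: "AE x in law. \<bar>x * indicator {..c} x\<bar> \<le> \<bar>c\<bar>"
      using law.AE_nonneg by eventually_elim (auto simp: indicator_def)
    show ?thesis
      unfolding law.lower_mean_def by (rule strong_law_random_index[OF _ bounded \<Phi>]) simp
  qed
  show "AE \<omega> in M. \<forall>c n. (\<Sum>k=1..\<Phi> n \<omega>. X k \<omega> * indicator {..c} (X k \<omega>)) \<le> \<Psi> n \<omega> \<longrightarrow>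
          (\<Sum>k=1..\<Phi> n \<omega>. indicator {..c} (X k \<omega>)) \<le> real (weakest_count (\<Phi> n \<omega>) (\<lambda>k. X k \<omega>) (\<Psi> n \<omega>))"
    using AE_all_nonneg by eventually_elim (intro allI impI weakest_count_ge_threshold; auto)
  show "AE \<omega> in M. \<forall>c n. \<Psi> n \<omega> < (\<Sum>k=1..\<Phi> n \<omega>. X k \<omega> * indicator {..c} (X k \<omega>)) \<longrightarrow>
          real (weakest_count (\<Phi> n \<omega>) (\<lambda>k. X k \<omega>) (\<Psi> n \<omega>)) \<le> (\<Sum>k=1..\<Phi> n \<omega>. indicator {..c} (X k \<omega>))"
    using AE_all_nonneg by eventually_elim (intro allI impI weakest_count_le_threshold; auto)
  show "0 \<le> real (weakest_count (\<Phi> n \<omega>) (\<lambda>k. X k \<omega>) (\<Psi> n \<omega>))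
      \<and> real (weakest_count (\<Phi> n \<omega>) (\<lambda>k. X k \<omega>) (\<Psi> n \<omega>)) \<le> real (\<Phi> n \<omega>)" for \<omega> n
    by (simp add: weakest_count_le_length)
qed (blast intro: law.lower_mean_threshold_below law.lower_mean_threshold_above)+

theorem strongest_count_ratio_tendsto:
  assumes bounded: "AE x in law. x \<le> B"
    and \<Phi>: "AE \<omega> in M. filterlim (\<lambda>n. \<Phi> n \<omega>) at_top sequentially"
    and ratio: "AE \<omega> in M. (\<lambda>n. \<Psi> n \<omega> / real (\<Phi> n \<omega>)) \<longlonglongrightarrow> law.upper_mean \<theta>"
  shows "AE \<omega> in M. (\<lambda>n. real (strongest_count (\<Phi> n \<omega>) (\<lambda>k. X k \<omega>) (\<Psi> n \<omega>)) / real (\<Phi> n \<omega>))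
           \<longlonglongrightarrow> 1 - cdf law \<theta>"
proof (rule AE_ratio_tendsto_of_thresholds[OF ratio,
      where C = "\<lambda>c \<omega> n. \<Sum>k=1..\<Phi> n \<omega>. indicator {c<..} (X k \<omega>)"
        and S = "\<lambda>c \<omega> n. \<Sum>k=1..\<Phi> n \<omega>. X k \<omega> * indicator {c<..} (X k \<omega>)"])
  show "AE \<omega> in M. (\<lambda>n. (\<Sum>k=1..\<Phi> n \<omega>. indicator {c<..} (X k \<omega>)) / real (\<Phi> n \<omega>)) \<longlonglongrightarrow> 1 - cdf law c" for c
  proof -
    have "(\<integral>x. indicator {c<..} x \<partial>law) = 1 - cdf law c"
      using law.measure_greaterThan[of c] by simp
    then show ?thesis
      using strong_law_random_index[OF _ _ \<Phi>, of "indicator {c<..}" 1] by (simp only:) simp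
  qed
  show "AE \<omega> in M. (\<lambda>n. (\<Sum>k=1..\<Phi> n \<omega>. X k \<omega> * indicator {c<..} (X k \<omega>)) / real (\<Phi> n \<omega>))
          \<longlonglongrightarrow> law.upper_mean c" for c
  proof -
    have bounded: "AE x in law. \<bar>x * indicator {c<..} x\<bar> \<le> \<bar>B\<bar>"
      using law.AE_nonneg bounded by eventually_elim (auto simp: indicator_def)
    show ?thesis
      unfolding law.upper_mean_def by (rule strong_law_random_index[OF _ bounded \<Phi>]) simp
  qed
  show "AE \<omega> in M. \<forall>c n. (\<Sum>k=1..\<Phi> n \<omega>. X k \<omega> * indicator {c<..} (X k \<omega>)) \<le> \<Psi> n \<omega> \<longrightarrow>
          (\<Sum>k=1..\<Phi> n \<omega>. indicator {c<..} (X k \<omega>)) \<le> real (strongest_count (\<Phi> n \<omega>) (\<lambda>k. X k \<omega>) (\<Psi> n \<omega>))"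
    using AE_all_nonneg by eventually_elim (intro allI impI strongest_count_ge_threshold; auto)
  show "AE \<omega> in M. \<forall>c n. \<Psi> n \<omega> < (\<Sum>k=1..\<Phi> n \<omega>. X k \<omega> * indicator {c<..} (X k \<omega>)) \<longrightarrow>
          real (strongest_count (\<Phi> n \<omega>) (\<lambda>k. X k \<omega>) (\<Psi> n \<omega>)) \<le> (\<Sum>k=1..\<Phi> n \<omega>. indicator {c<..} (X k \<omega>))"
    using AE_all_nonneg by eventually_elim (intro allI impI strongest_count_le_threshold; auto)
  show "0 \<le> real (strongest_count (\<Phi> n \<omega>) (\<lambda>k. X k \<omega>) (\<Psi> n \<omega>))
      \<and> real (strongest_count (\<Phi> n \<omega>) (\<lambda>k. X k \<omega>) (\<Psi> n \<omega>)) \<le> real (\<Phi> n \<omega>)" for \<omega> n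
    by (simp add: strongest_count_le_length)
qed (blast intro: law.upper_mean_threshold_below law.upper_mean_threshold_above)+

end

theorem mainTheorem12:
  fixes M :: "'a measure" and X :: "nat \<Rightarrow> 'a \<Rightarrow> real"
    and \<Phi> :: "nat \<Rightarrow> 'a \<Rightarrow> nat" and \<Psi> :: "nat \<Rightarrow> 'a \<Rightarrow> real"
    and F :: "real \<Rightarrow> real" and \<mu> \<rho> \<tau> :: real
  assumes P: "prob_space M"
    and X_rv: "\<And>i. i \<ge> 1 \<Longrightarrow> X i \<in> borel_measurable M"
    and X_indep: "prob_space.indep_vars M (\<lambda>_. borel) X {1..}"
    and X_ident: "\<And>i. i \<ge> 1 \<Longrightarrow> distr M borel (X i) = distr M borel (X 1)"
    and X_nonneg: "\<And>i. i \<ge> 1 \<Longrightarrow> AE \<omega> in M. X i \<omega> \<ge> 0"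
    and X_int: "integrable M (X 1)"
    and mu_def: "\<mu> = (\<integral>\<omega>. X 1 \<omega> \<partial>M)"
    and F_def: "F = cdf (distr M borel (X 1))"
    and F_cont: "continuous_on UNIV F"
    and Phi_rv: "\<And>n. \<Phi> n \<in> measurable M (count_space UNIV)"
    and Psi_rv: "\<And>n. \<Psi> n \<in> borel_measurable M"
    and Phi_inf: "AE \<omega> in M. filterlim (\<lambda>n. \<Phi> n \<omega>) at_top sequentially"
    and Psi_inf: "AE \<omega> in M. filterlim (\<lambda>n. \<Psi> n \<omega>) at_top sequentially"
    and ratio: "AE \<omega> in M. (\<lambda>n. \<Psi> n \<omega> / real (\<Phi> n \<omega>)) \<longlonglongrightarrow> \<rho>"
    and rho_pos: "0 < \<rho>" and rho_le: "\<rho> \<le> \<mu>"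
    and tau: "(LINT x:{0..\<tau>}|distr M borel (X 1). x) = \<rho>"
  shows "(AE \<omega> in M. (\<lambda>n. real (weakest_count (\<Phi> n \<omega>) (\<lambda>k. X k \<omega>) (\<Psi> n \<omega>))
                              / real (\<Phi> n \<omega>)) \<longlonglongrightarrow> F \<tau>)
       \<and> ((\<exists>B. \<forall>i\<ge>1. AE \<omega> in M. X i \<omega> \<le> B) \<longrightarrow>
           (\<forall>\<theta>. (LINT x:{\<theta>..Inf {y. F y = 1}}|distr M borel (X 1). x) = \<rho> \<longrightarrow>
              (AE \<omega> in M. (\<lambda>n. real (strongest_count (\<Phi> n \<omega>) (\<lambda>k. X k \<omega>) (\<Psi> n \<omega>))
                              / real (\<Phi> n \<omega>)) \<longlonglongrightarrow> 1 - F \<theta>)))"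
proof -
  interpret continuous_nonneg_iid M X
    by (rule continuous_nonneg_iid.intro[OF P X_indep X_ident X_nonneg X_int F_cont[unfolded F_def]])
  have F: "F = cdf law" by (rule F_def)
  show ?thesis
  proof (intro conjI impI allI)
    have "law.lower_mean \<tau> = \<rho>"
      using tau by (simp only: law.set_integral_eq_lower_mean)
    then show "AE \<omega> in M. (\<lambda>n. real (weakest_count (\<Phi> n \<omega>) (\<lambda>k. X k \<omega>) (\<Psi> n \<omega>)) / real (\<Phi> n \<omega>)) \<longlonglongrightarrow> F \<tau>"
      using weakest_count_ratio_tendsto[OF Phi_inf] ratio F by simp
  next
    fix \<theta>
    assume "\<exists>B. \<forall>i\<ge>1. AE \<omega> in M. X i \<omega> \<le> B"
    then obtain B where "AE \<omega> in M. X 1 \<omega> \<le> B" by auto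
    then have bounded: "AE x in law. x \<le> B"
      by (subst AE_distr_iff) auto
    assume "(LINT x:{\<theta>..Inf {y. F y = 1}}|law. x) = \<rho>"
    then have "law.upper_mean \<theta> = \<rho>"
      unfolding F law.set_integral_eq_upper_mean[OF law.cdf_Inf_level_1[OF bounded]] .
    then show "AE \<omega> in M. (\<lambda>n. real (strongest_count (\<Phi> n \<omega>) (\<lambda>k. X k \<omega>) (\<Psi> n \<omega>)) / real (\<Phi> n \<omega>)) \<longlonglongrightarrow> 1 - F \<theta>"
      using strongest_count_ratio_tendsto[OF bounded Phi_inf] ratio F by simp
  qed
qed

end
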